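(* Let $G$ be a finite abelian group. Then $\delta(G)\le (2|G|)^{3|G|+1}$.
   Context: $G$ is written additively. A sequence over $G$ is a finite unordered list of elements of $G$ with repetitions (an element of the free abelian monoid $\mathcal{F}(G)$). A zero-sum sequence has sum $0$; a minimal zero-sum sequence is a non-empty zero-sum sequence with no proper non-empty zero-sum subsequence; $\mathcal{A}(G)$ is the set of these. Factorizations are elements of the free abelian monoid $\mathsf{Z}(G)$ over $\mathcal{A}(G)$ (formal unordered products of minimal zero-sum sequences); $\pi:\mathsf{Z}(G)\to\mathcal{F}(G)$ evaluates the product; $|\zeta|$ is the number of factors (with multiplicity); for a zero-sum sequence $B$, $\mathsf{L}(B)=\{|\zeta|: \pi(\zeta)=B\}$. For $\zeta,\xi\in\mathsf{Z}(G)$, $\mathsf{d}(\zeta,\xi)=\max\{|\gcd(\zeta,\xi)^{-1}\zeta|,|\gcd(\zeta,\xi)^{-1}\xi|\}$. Two distinct $k,\ell\in\mathsf{L}(B)$ are adjacent lengths of $B$ if no element of $\mathsf{L}(B)$ lies strictly between them. For $\zeta\in\mathsf{Z}(G)$, $\delta(\zeta)$ is the smallest $m\in\mathbb{N}_0$ such that whenever $k\in\mathbb{N}$ and $k$, $|\zeta|$ are adjacent lengths of $\pi(\zeta)$, there is $\xi\in\mathsf{Z}(G)$ with $\pi(\xi)=\pi(\zeta)$, $|\xi|=k$ and $\mathsf{d}(\xi,\zeta)\le m$. The successive distance is $\delta(G)=\sup\{\delta(\zeta):\zeta\in\mathsf{Z}(G)\}$. *)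

theory Defs
  imports Main "HOL-Library.Multiset" "HOL-Library.Extended_Nat"
begin

text \<open>Finite abelian group G = a type of class finite + ab_group_add (written additively).
  Sequences over G are multisets over G; factorizations are multisets of atoms.\<close>

definition zero_sum :: "'a::ab_group_add multiset \<Rightarrow> bool" where
  "zero_sum S \<longleftrightarrow> sum_mset S = 0"

definition minimal_zero_sum :: "'a::ab_group_add multiset \<Rightarrow> bool" where
  "minimal_zero_sum S \<longleftrightarrow> S \<noteq> {#} \<and> zero_sum S \<and>
     (\<forall>T. T \<subseteq># S \<and> T \<noteq> {#} \<and> zero_sum T \<longrightarrow> T = S)"

definition is_factorization :: "'a::ab_group_add multiset multiset \<Rightarrow> bool" where
  "is_factorization z \<longleftrightarrow> (\<forall>A \<in># z. minimal_zero_sum A)"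

text \<open>pi evaluates the product in the free abelian monoid F(G).\<close>
definition fact_pi :: "'a multiset multiset \<Rightarrow> 'a multiset" where
  "fact_pi z = sum_mset z"

definition lengths :: "'a::ab_group_add multiset \<Rightarrow> nat set" where
  "lengths B = {size z | z. is_factorization z \<and> fact_pi z = B}"

definition fact_dist :: "'a multiset multiset \<Rightarrow> 'a multiset multiset \<Rightarrow> nat" where
  "fact_dist z x = max (size (z - (z \<inter># x))) (size (x - (z \<inter># x)))"

definition adjacent_lengths :: "'a::ab_group_add multiset \<Rightarrow> nat \<Rightarrow> nat \<Rightarrow> bool" where
  "adjacent_lengths B k l \<longleftrightarrow> k \<in> lengths B \<and> l \<in> lengths B \<and> k \<noteq> l \<and>
     \<not> (\<exists>m \<in> lengths B. min k l < m \<and> m < max k l)"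

definition delta_fact :: "'a::ab_group_add multiset multiset \<Rightarrow> nat" where
  "delta_fact z = (LEAST m::nat. \<forall>k::nat. k \<ge> 1 \<and> adjacent_lengths (fact_pi z) k (size z) \<longrightarrow>
      (\<exists>x. is_factorization x \<and> fact_pi x = fact_pi z \<and> size x = k \<and> fact_dist x z \<le> m))"

definition successive_distance :: "'a::{finite,ab_group_add} itself \<Rightarrow> enat" where
  "successive_distance _ = Sup ((\<lambda>z. enat (delta_fact z)) ` {z :: 'a multiset multiset. is_factorization z})"

end

theory Submission
  imports Defs "HOL-Library.Cardinality" "HOL-Library.FuncSet"
begin

text \<open>Fix a factorization \<open>z\<close> and a length \<open>k\<close> adjacent to \<open>|z|\<close>, and let \<open>\<xi>\<close> be a
  factorization of length \<open>k\<close> of the same sequence sharing as many atoms with \<open>z\<close> as possible.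
  Encode each atom \<open>A\<close> of \<open>z - \<xi>\<close> as the integer vector \<open>(1, (count A g)\<^sub>g)\<close> of dimension
  \<open>1 + |G|\<close>, each atom of \<open>\<xi> - z\<close> as the negative of its vector, and add \<open>|k - |z||\<close> vectors
  \<open>\<plusminus>e\<^sub>0\<close> so that the total sum is zero. A Steinitz-type lemma (proved with basic solutions of
  a linear system) orders these vectors so that all partial sums lie in a box with
  \<open>(2|G| + 3) (2(|G| + 1)|G| + 1)^|G|\<close> points. If \<open>z - \<xi>\<close> and \<open>\<xi> - z\<close> had more atoms than
  that, two partial sums would coincide, and the block between them yields atoms \<open>\<alpha> \<subseteq> z - \<xi>\<close>
  and \<open>\<beta> \<subseteq> \<xi> - z\<close> with equal products, forming a proper nontrivial part of the exchange.
  Replacing \<open>\<beta>\<close> by \<open>\<alpha>\<close> in \<open>\<xi>\<close> gives a factorization whose length lies between \<open>k\<close> and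
  \<open>|z|\<close>, hence equals one of them; either way, \<open>\<xi>\<close> or the factorization obtained from \<open>z\<close> by
  replacing \<open>\<alpha>\<close> by \<open>\<beta>\<close> contradicts the choice of \<open>\<xi>\<close>. Finally
  \<open>(2|G| + 3) (2(|G| + 1)|G| + 1)^|G| \<le> (2|G|)^(3|G| + 1)\<close> for \<open>|G| \<ge> 2\<close>, while
  for the trivial group all factorizations of a sequence have the same length.\<close>

section \<open>Basic solutions of linear systems\<close>

lemma homogeneous_system_nontrivial_solution:
  fixes a :: "'r \<Rightarrow> 'i \<Rightarrow> real"
  assumes "finite R" "finite F" "card R < card F"
  shows "\<exists>z. (\<exists>i\<in>F. z i \<noteq> 0) \<and> (\<forall>r\<in>R. (\<Sum>i\<in>F. z i * a r i) = 0)"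
  using assms
proof (induction R arbitrary: F a rule: finite_induct)
  case empty
  then obtain i where "i \<in> F" by fastforce
  then show ?case by (intro exI[of _ "\<lambda>_. 1"]) auto
next
  case (insert r0 R F a)
  show ?case
  proof (cases "\<forall>i\<in>F. a r0 i = 0")
    case True
    then show ?thesis using insert.IH[of F a] insert.hyps insert.prems by auto
  next
    case False
    then obtain j where j: "j \<in> F" "a r0 j \<noteq> 0" by auto
    define F' where "F' = F - {j}"
    have F: "F = insert j F'" "j \<notin> F'" "finite F'" using j insert.prems by (auto simp: F'_def)
    \<comment> \<open>eliminate the unknown \<open>j\<close> using the equation \<open>r0\<close>\<close>
    define a' where "a' = (\<lambda>r i. a r i - a r0 i / a r0 j * a r j)"
    obtain z' where z': "\<exists>i\<in>F'. z' i \<noteq> 0" "\<forall>r\<in>R. (\<Sum>i\<in>F'. z' i * a' r i) = 0"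
      using insert.IH[of F' a'] insert.hyps insert.prems F by auto
    define w where "w = - (\<Sum>i\<in>F'. z' i * a r0 i) / a r0 j"
    define z where "z = z'(j := w)"
    have sum_F: "(\<Sum>i\<in>F. z i * h i) = (\<Sum>i\<in>F'. z' i * h i) + w * h j" for h
      using F by (simp add: z_def sum.insert_remove) (intro sum.cong; auto)
    have "(\<Sum>i\<in>F. z i * a r i) = 0" if "r \<in> R" for r
    proof -
      have "0 = (\<Sum>i\<in>F'. z' i * a' r i)" using z' that by auto
      also have "\<dots> = (\<Sum>i\<in>F'. z' i * a r i) + w * a r j"
        by (simp add: a'_def w_def right_diff_distrib sum_subtractf sum_distrib_right
            sum_divide_distrib mult.assoc)
      finally show ?thesis using sum_F by simp
    qed
    moreover have "(\<Sum>i\<in>F. z i * a r0 i) = 0" using sum_F j by (simp add: w_def)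
    moreover have "\<exists>i\<in>F. z i \<noteq> 0" using z' F by (auto simp: z_def)
    ultimately show ?thesis by (intro exI[of _ z]) auto
  qed
qed

definition exit_time :: "real \<Rightarrow> real \<Rightarrow> real" where
  "exit_time v d = (if d > 0 then (1 - v) / d else v / - d)"

lemma exit_time_nonneg: "0 \<le> v \<Longrightarrow> v \<le> 1 \<Longrightarrow> 0 \<le> exit_time v d"
  by (auto simp: exit_time_def divide_nonneg_nonpos)

lemma before_exit_time_in_unit_interval:
  assumes "0 \<le> v" "v \<le> 1" "0 \<le> t" "t \<le> exit_time v d"
  shows "0 \<le> v + t * d \<and> v + t * d \<le> 1"
proof (cases "d > 0")
  case True
  then have "t * d \<le> 1 - v" using assms(4) by (simp add: exit_time_def pos_le_divide_eq)
  then show ?thesis using assms True by simp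
next
  case False
  have "t * - d \<le> v"
  proof (cases "d = 0")
    case False
    then have "- d > 0" using \<open>\<not> d > 0\<close> by simp
    moreover have "t \<le> v / - d" using assms(4) \<open>\<not> d > 0\<close> by (simp add: exit_time_def)
    ultimately show ?thesis using pos_le_divide_eq by blast
  qed (use assms in simp)
  moreover have "t * d \<le> 0" using assms(3) False by (simp add: mult_nonneg_nonpos)
  ultimately show ?thesis using assms by linarith
qed

lemma at_exit_time: "d \<noteq> 0 \<Longrightarrow> v + exit_time v d * d = 0 \<or> v + exit_time v d * d = 1"
  by (auto simp: exit_time_def)

definition unit_cube :: "'i set \<Rightarrow> ('i \<Rightarrow> real) set" where
  "unit_cube I = {\<nu>. \<forall>i\<in>I. 0 \<le> \<nu> i \<and> \<nu> i \<le> 1}"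

definition fractional_coords :: "'i set \<Rightarrow> ('i \<Rightarrow> real) \<Rightarrow> 'i set" where
  "fractional_coords I \<nu> = {i\<in>I. 0 < \<nu> i \<and> \<nu> i < 1}"

lemma reduce_fractional_coords_step:
  fixes a :: "'r \<Rightarrow> 'i \<Rightarrow> real"
  assumes R: "finite R" and I: "finite I" and \<nu>: "\<nu> \<in> unit_cube I"
    and eq: "\<forall>r\<in>R. (\<Sum>i\<in>I. \<nu> i * a r i) = b r"
    and many: "card R < card (fractional_coords I \<nu>)"
  obtains \<nu>' where "\<nu>' \<in> unit_cube I" "\<forall>r\<in>R. (\<Sum>i\<in>I. \<nu>' i * a r i) = b r"
    "card (fractional_coords I \<nu>') < card (fractional_coords I \<nu>)"
proof -
  define F where "F = fractional_coords I \<nu>"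
  have F: "finite F" "F \<subseteq> I" using I by (auto simp: F_def fractional_coords_def)
  obtain z where z: "\<exists>i\<in>F. z i \<noteq> 0" "\<forall>r\<in>R. (\<Sum>i\<in>F. z i * a r i) = 0"
    using homogeneous_system_nontrivial_solution[OF R F(1), where a=a] many by (auto simp: F_def)
  define d where "d i = (if i \<in> F then z i else 0)" for i
  define Z where "Z = {i\<in>F. d i \<noteq> 0}"
  have Z: "finite Z" "Z \<noteq> {}" using F z(1) by (auto simp: Z_def d_def)
  \<comment> \<open>move along \<open>d\<close> until the first coordinate reaches \<open>0\<close> or \<open>1\<close>\<close>
  define t where "t = Min ((\<lambda>i. exit_time (\<nu> i) (d i)) ` Z)"
  have "t \<in> (\<lambda>i. exit_time (\<nu> i) (d i)) ` Z"
    unfolding t_def using Z by (intro Min_in) auto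
  then obtain i1 where i1: "i1 \<in> Z" "t = exit_time (\<nu> i1) (d i1)" by blast
  have t_le: "t \<le> exit_time (\<nu> i) (d i)" if "i \<in> Z" for i
    using Z that by (simp add: t_def)
  have t_nonneg: "0 \<le> t"
    using i1 F \<nu> exit_time_nonneg by (auto simp: Z_def unit_cube_def)
  define \<nu>' where "\<nu>' i = \<nu> i + t * d i" for i
  have "0 \<le> \<nu>' i \<and> \<nu>' i \<le> 1" if "i \<in> I" for i
  proof (cases "i \<in> Z")
    case True
    then show ?thesis
      using \<nu> that before_exit_time_in_unit_interval[OF _ _ t_nonneg t_le]
      by (auto simp: unit_cube_def \<nu>'_def)
  next
    case False
    then have "d i = 0" by (auto simp: Z_def d_def)
    then show ?thesis using \<nu> that by (simp add: unit_cube_def \<nu>'_def)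
  qed
  then have "\<nu>' \<in> unit_cube I" by (simp add: unit_cube_def)
  moreover have "(\<Sum>i\<in>I. \<nu>' i * a r i) = b r" if "r \<in> R" for r
  proof -
    have "(\<Sum>i\<in>I. d i * a r i) = (\<Sum>i\<in>F. z i * a r i)"
      using I F by (intro sum.mono_neutral_cong_right) (auto simp: d_def)
    moreover have "(\<Sum>i\<in>I. \<nu>' i * a r i) = (\<Sum>i\<in>I. \<nu> i * a r i) + t * (\<Sum>i\<in>I. d i * a r i)"
      by (simp add: \<nu>'_def distrib_right sum.distrib sum_distrib_left mult.assoc)
    ultimately show ?thesis using eq z(2) that by simp
  qed
  moreover have "fractional_coords I \<nu>' \<subseteq> F - {i1}"
  proof
    fix i assume i: "i \<in> fractional_coords I \<nu>'"
    have "\<nu>' i1 = 0 \<or> \<nu>' i1 = 1"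
      using at_exit_time[of "d i1" "\<nu> i1"] i1 by (simp add: \<nu>'_def Z_def)
    then have "i \<noteq> i1" using i by (auto simp: fractional_coords_def)
    moreover have "i \<in> F"
    proof (rule ccontr)
      assume "i \<notin> F"
      then have "\<nu>' i = \<nu> i" by (simp add: \<nu>'_def d_def)
      then show False using i \<open>i \<notin> F\<close> by (simp add: F_def fractional_coords_def)
    qed
    ultimately show "i \<in> F - {i1}" by simp
  qed
  then have "card (fractional_coords I \<nu>') \<le> card (F - {i1})"
    using F by (intro card_mono) auto
  moreover have "card (F - {i1}) < card F"
    using F i1 by (intro card_Diff1_less) (auto simp: Z_def)
  ultimately show ?thesis using that F_def by fastforce
qed

lemma reduce_fractional_coords:
  fixes a :: "'r \<Rightarrow> 'i \<Rightarrow> real"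
  assumes "finite R" "finite I" "\<nu> \<in> unit_cube I" "\<forall>r\<in>R. (\<Sum>i\<in>I. \<nu> i * a r i) = b r"
  obtains \<nu>' where "\<nu>' \<in> unit_cube I" "\<forall>r\<in>R. (\<Sum>i\<in>I. \<nu>' i * a r i) = b r"
    "card (fractional_coords I \<nu>') \<le> card R"
  using assms(3,4)
proof (induction "card (fractional_coords I \<nu>)" arbitrary: \<nu> rule: less_induct)
  case less
  show ?case
  proof (cases "card (fractional_coords I \<nu>) \<le> card R")
    case False
    then obtain \<nu>' where "\<nu>' \<in> unit_cube I" "\<forall>r\<in>R. (\<Sum>i\<in>I. \<nu>' i * a r i) = b r"
      "card (fractional_coords I \<nu>') < card (fractional_coords I \<nu>)"
      using reduce_fractional_coords_step[OF assms(1,2) less.prems(2,3)] by auto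
    then show ?thesis using less.hyps less.prems(1) by blast
  qed (use less.prems in blast)
qed

section \<open>A Steinitz lemma\<close>

lemma abs_sum_list_le:
  fixes f :: "'b \<Rightarrow> real"
  assumes "\<forall>x\<in>set xs. \<bar>f x\<bar> \<le> m"
  shows "\<bar>\<Sum>x\<leftarrow>xs. f x\<bar> \<le> real (length xs) * m"
  using assms
proof (induction xs)
  case (Cons x xs)
  have "\<bar>\<Sum>y\<leftarrow>x # xs. f y\<bar> \<le> \<bar>f x\<bar> + \<bar>\<Sum>y\<leftarrow>xs. f y\<bar>" by (simp add: abs_triangle_ineq)
  also have "\<dots> \<le> m + real (length xs) * m" using Cons by (intro add_mono) auto
  finally show ?case by (simp add: algebra_simps)
qed simp

lemma small_index_set_prefix_sums_bounded:
  fixes v :: "'i::linorder \<Rightarrow> 'c \<Rightarrow> real"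
  assumes "finite I" "card I \<le> D" "\<forall>i\<in>I. \<forall>c. \<bar>v i c\<bar> \<le> M c" "\<forall>c. 0 \<le> M c"
  shows "\<exists>js. distinct js \<and> set js = I \<and> (\<forall>j c. \<bar>\<Sum>i\<leftarrow>take j js. v i c\<bar> \<le> real D * M c)"
proof -
  define js where "js = sorted_list_of_set I"
  have js: "distinct js" "set js = I" "length js = card I"
    using assms(1) by (auto simp: js_def)
  have "\<bar>\<Sum>i\<leftarrow>take j js. v i c\<bar> \<le> real D * M c" for j c
  proof -
    have "\<bar>\<Sum>i\<leftarrow>take j js. v i c\<bar> \<le> real (length (take j js)) * M c"
      using js(2) assms(3) by (intro abs_sum_list_le) (meson in_set_takeD)
    also have "\<dots> \<le> real D * M c" using js(3) assms(2,4) by (intro mult_right_mono) auto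
    finally show ?thesis .
  qed
  then show ?thesis using js by blast
qed

lemma abs_sum_le_by_complementary_weights:
  fixes v :: "'i \<Rightarrow> real"
  assumes "finite I" "wt \<in> unit_cube I" "\<forall>i\<in>I. \<bar>v i\<bar> \<le> m" "(\<Sum>i\<in>I. wt i * v i) = 0"
  shows "\<bar>\<Sum>i\<in>I. v i\<bar> \<le> (real (card I) - (\<Sum>i\<in>I. wt i)) * m"
proof -
  have "\<bar>\<Sum>i\<in>I. v i\<bar> = \<bar>\<Sum>i\<in>I. (1 - wt i) * v i\<bar>"
    using assms(4) by (simp add: left_diff_distrib sum_subtractf)
  also have "\<dots> \<le> (\<Sum>i\<in>I. \<bar>(1 - wt i) * v i\<bar>)" by (rule sum_abs)
  also have "\<dots> \<le> (\<Sum>i\<in>I. (1 - wt i) * m)"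
    using assms(2,3) by (intro sum_mono) (auto simp: unit_cube_def abs_mult mult_left_mono)
  also have "\<dots> = (real (card I) - (\<Sum>i\<in>I. wt i)) * m"
    by (simp add: sum_distrib_right[symmetric] sum_subtractf)
  finally show ?thesis .
qed

lemma unit_cube_exists_zero_coord:
  assumes I: "finite I" and \<nu>: "\<nu> \<in> unit_cube I"
    and "card (fractional_coords I \<nu>) \<le> m" "0 < m" "(\<Sum>i\<in>I. \<nu> i) + real m \<le> real (card I)"
  shows "\<exists>i\<in>I. \<nu> i = 0"
proof (rule ccontr)
  assume no_zero: "\<not> ?thesis"
  define F where "F = fractional_coords I \<nu>"
  have F: "finite F" "F \<subseteq> I" using I by (auto simp: F_def fractional_coords_def)
  have "\<nu> i = 1" if "i \<in> I - F" for i
    using \<nu> that no_zero by (force simp: unit_cube_def F_def fractional_coords_def)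
  then have "(\<Sum>i\<in>I. \<nu> i) = real (card I) - real (card F) + (\<Sum>i\<in>F. \<nu> i)"
    using F I by (simp add: sum.subset_diff[OF F(2) I] card_Diff_subset of_nat_diff card_mono)
  moreover have "(\<Sum>i\<in>F. \<nu> i) > 0" if "F \<noteq> {}"
    using F that by (intro sum_pos) (auto simp: F_def fractional_coords_def)
  ultimately show False using assms(3-5) F_def by (cases "F = {}") auto
qed

lemma reweight_with_zero_coord:
  fixes v :: "'i \<Rightarrow> 'c::finite \<Rightarrow> real"
  assumes I: "finite I" "card I = Suc k" and k: "CARD('c) \<le> k" and wt: "wt \<in> unit_cube I"
    and wt_v: "\<forall>c. (\<Sum>i\<in>I. wt i * v i c) = 0" and wt_sum: "(\<Sum>i\<in>I. wt i) = real (Suc k) - real CARD('c)"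
  obtains \<nu> i0 where "\<nu> \<in> unit_cube I" "\<forall>c. (\<Sum>i\<in>I. \<nu> i * v i c) = 0"
    "(\<Sum>i\<in>I. \<nu> i) = real k - real CARD('c)" "i0 \<in> I" "\<nu> i0 = 0"
proof -
  let ?D = "CARD('c)"
  \<comment> \<open>rescale the weights to sum \<open>k - D\<close>, then pass to a solution with at most \<open>D + 1\<close>
      fractional coordinates: by the sum condition one of its coordinates must vanish\<close>
  define s where "s = (real k - real ?D) / (real (Suc k) - real ?D)"
  have s: "0 \<le> s" "s \<le> 1" using k by (auto simp: s_def)
  define a :: "'c option \<Rightarrow> 'i \<Rightarrow> real" where
    "a r i = (case r of None \<Rightarrow> 1 | Some c \<Rightarrow> v i c)" for r i
  define b :: "'c option \<Rightarrow> real" where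
    "b r = (case r of None \<Rightarrow> real k - real ?D | Some c \<Rightarrow> 0)" for r
  have "(\<lambda>i. s * wt i) \<in> unit_cube I"
    using wt s by (auto simp: unit_cube_def mult_le_one)
  moreover have "\<forall>r\<in>UNIV. (\<Sum>i\<in>I. s * wt i * a r i) = b r"
  proof
    fix r :: "'c option"
    have "(\<Sum>i\<in>I. s * wt i * a r i) = s * (\<Sum>i\<in>I. wt i * a r i)"
      by (simp add: sum_distrib_left mult.assoc)
    moreover have "s * (real (Suc k) - real ?D) = real k - real ?D"
      using k by (simp add: s_def)
    ultimately show "(\<Sum>i\<in>I. s * wt i * a r i) = b r"
      using wt_v wt_sum by (cases r) (simp_all add: a_def b_def)
  qed
  ultimately obtain \<nu> where \<nu>: "\<nu> \<in> unit_cube I" "\<forall>r\<in>UNIV. (\<Sum>i\<in>I. \<nu> i * a r i) = b r"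
    "card (fractional_coords I \<nu>) \<le> card (UNIV :: 'c option set)"
    by (rule reduce_fractional_coords[OF finite_class.finite_UNIV I(1)])
  have \<nu>_sum: "(\<Sum>i\<in>I. \<nu> i) = real k - real ?D"
    using \<nu>(2)[rule_format, of None] by (simp add: a_def b_def)
  moreover have "(\<Sum>i\<in>I. \<nu> i * v i c) = 0" for c
    using \<nu>(2)[rule_format, of "Some c"] by (simp add: a_def b_def)
  moreover obtain i0 where "i0 \<in> I" "\<nu> i0 = 0"
    using unit_cube_exists_zero_coord[OF I(1) \<nu>(1), of "?D + 1"] \<nu>(3) \<nu>_sum I(2) by auto
  ultimately show ?thesis using that \<nu>(1) by blast
qed

lemma steinitz_weighted:
  fixes v :: "'i::linorder \<Rightarrow> 'c::finite \<Rightarrow> real"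
  assumes "finite I" "\<forall>i\<in>I. \<forall>c. \<bar>v i c\<bar> \<le> M c" "\<forall>c. 0 \<le> M c" "wt \<in> unit_cube I"
    "\<forall>c. (\<Sum>i\<in>I. wt i * v i c) = 0" "(\<Sum>i\<in>I. wt i) = real (card I) - real CARD('c)"
  shows "\<exists>js. distinct js \<and> set js = I \<and> (\<forall>j c. \<bar>\<Sum>i\<leftarrow>take j js. v i c\<bar> \<le> real CARD('c) * M c)"
  using assms
proof (induction "card I" arbitrary: I wt)
  case 0
  then show ?case using small_index_set_prefix_sums_bounded[of I "CARD('c)" v M] by simp
next
  case (Suc k)
  let ?D = "CARD('c)"
  show ?case
  proof (cases "Suc k \<le> ?D")
    case True
    then show ?thesis using small_index_set_prefix_sums_bounded[of I ?D v M] Suc by simp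
  next
    case False
    then have "?D \<le> k" by simp
    then obtain \<nu> i0 where \<nu>: "\<nu> \<in> unit_cube I" "\<forall>c. (\<Sum>i\<in>I. \<nu> i * v i c) = 0"
      "(\<Sum>i\<in>I. \<nu> i) = real k - real ?D" and i0: "i0 \<in> I" "\<nu> i0 = 0"
      using reweight_with_zero_coord[OF Suc.prems(1) Suc.hyps(2)[symmetric] _ Suc.prems(4,5)]
        Suc.prems(6) Suc.hyps(2) by auto
    define I' where "I' = I - {i0}"
    have I': "finite I'" "k = card I'" using Suc.prems(1) Suc.hyps(2) i0 by (auto simp: I'_def)
    have "\<nu> \<in> unit_cube I'" "\<forall>i\<in>I'. \<forall>c. \<bar>v i c\<bar> \<le> M c"
      using \<nu>(1) Suc.prems(2) by (auto simp: I'_def unit_cube_def)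
    moreover have "\<forall>c. (\<Sum>i\<in>I'. \<nu> i * v i c) = 0" "(\<Sum>i\<in>I'. \<nu> i) = real (card I') - real ?D"
      using \<nu>(2,3) i0 Suc.prems(1) I'(2) by (simp_all add: I'_def sum_diff1)
    ultimately obtain js' where js': "distinct js'" "set js' = I'"
      "\<forall>j c. \<bar>\<Sum>i\<leftarrow>take j js'. v i c\<bar> \<le> real ?D * M c"
      using Suc.hyps(1)[OF I'(2)] I'(1) Suc.prems(3) by blast
    \<comment> \<open>the full sum, the only new prefix, is controlled by the complementary weights\<close>
    define js where "js = js' @ [i0]"
    have js: "distinct js" "set js = I" using js' i0 by (auto simp: js_def I'_def)
    have "length js' = k" using js' I' distinct_card by fastforce
    have "\<bar>\<Sum>i\<leftarrow>take j js. v i c\<bar> \<le> real ?D * M c" for j c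
    proof (cases "j \<le> k")
      case True
      then show ?thesis using js'(3) \<open>length js' = k\<close> by (simp add: js_def)
    next
      case False
      then have "take j js = js" using \<open>length js' = k\<close> by (simp add: js_def)
      then have "(\<Sum>i\<leftarrow>take j js. v i c) = (\<Sum>i\<in>I. v i c)"
        using js by (simp add: sum_list_distinct_conv_sum_set)
      then show ?thesis
        using abs_sum_le_by_complementary_weights[OF Suc.prems(1,4), of "\<lambda>i. v i c" "M c"]
          Suc.prems(2,5,6) by simp
    qed
    then show ?thesis using js by blast
  qed
qed

lemma steinitz:
  fixes f :: "'b \<Rightarrow> 'c::finite \<Rightarrow> real"
  assumes sum0: "\<forall>c. (\<Sum>x\<in>#X. f x c) = 0" and bnd: "\<forall>x\<in>#X. \<forall>c. \<bar>f x c\<bar> \<le> M c"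
    and M: "\<forall>c. 0 \<le> M c"
  shows "\<exists>ys. mset ys = X \<and> (\<forall>j c. \<bar>\<Sum>x\<leftarrow>take j ys. f x c\<bar> \<le> real CARD('c) * M c)"
proof -
  obtain xs where xs: "mset xs = X" using ex_mset by blast
  define I where "I = {..<length xs}"
  define v where "v i c = f (xs ! i) c" for i c
  have I: "finite I" "card I = length xs" by (simp_all add: I_def)
  have v_bnd: "\<forall>i\<in>I. \<forall>c. \<bar>v i c\<bar> \<le> M c"
    using bnd xs by (auto simp: I_def v_def)
  have v_sum: "(\<Sum>i\<in>I. v i c) = 0" for c
  proof -
    have "(\<Sum>i\<in>I. v i c) = (\<Sum>x\<leftarrow>xs. f x c)"
      by (simp add: I_def v_def sum_list_sum_nth atLeast0LessThan)
    also have "\<dots> = (\<Sum>x\<in>#X. f x c)" using xs by (metis mset_map sum_mset_sum_list)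
    finally show ?thesis using sum0 by simp
  qed
  obtain js where js: "distinct js" "set js = I"
    "\<forall>j c. \<bar>\<Sum>i\<leftarrow>take j js. v i c\<bar> \<le> real CARD('c) * M c"
  proof (cases "length xs \<le> CARD('c)")
    case True
    then show ?thesis using small_index_set_prefix_sums_bounded[OF I(1) _ v_bnd M] I(2) that by auto
  next
    case False
    define wt where "wt i = (real (length xs) - real CARD('c)) / real (length xs)" for i :: nat
    have "wt \<in> unit_cube I" using False by (auto simp: wt_def unit_cube_def divide_le_eq_1)
    moreover have "(\<Sum>i\<in>I. wt i * v i c) = wt 0 * (\<Sum>i\<in>I. v i c)" for c
      by (simp add: wt_def sum_distrib_left)
    then have "\<forall>c. (\<Sum>i\<in>I. wt i * v i c) = 0" using v_sum by simp
    moreover have "(\<Sum>i\<in>I. wt i) = real (length xs) - real CARD('c)"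
      using I False by (cases xs) (simp_all add: wt_def)
    ultimately show ?thesis using steinitz_weighted[OF I(1) v_bnd M] I(2) that by auto
  qed
  define ys where "ys = map ((!) xs) js"
  have "mset js = mset [0..<length xs]"
    using js(1,2) by (simp add: I_def atLeast0LessThan) (metis mset_set_set)
  then have "mset ys = X"
    using xs by (metis map_nth mset_map ys_def)
  moreover have "(\<Sum>x\<leftarrow>take j ys. f x c) = (\<Sum>i\<leftarrow>take j js. v i c)" for j c
    by (simp add: ys_def take_map v_def comp_def)
  ultimately show ?thesis using js(3) by auto
qed

lemma pigeonhole_less:
  assumes "finite B" "f ` {..<n} \<subseteq> B" "card B < n"
  obtains a b where "a < b" "b < n" "f a = f b"
proof -
  have "\<not> inj_on f {..<n}"
    using assms card_mono[OF assms(1,2)] by (auto dest: card_image)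
  then obtain a b where "a < n" "b < n" "a \<noteq> b" "f a = f b"
    unfolding inj_on_def by blast
  then show ?thesis using that by (metis linorder_neqE_nat)
qed

lemma sum_list_take_split:
  fixes xs :: "'a::monoid_add list"
  assumes "a \<le> b"
  shows "sum_list (take b xs) = sum_list (take a xs) + sum_list (drop a (take b xs))"
  using assms by (metis append_take_drop_id min.absorb1 sum_list_append take_take)

lemma mset_drop_take_subset: "mset (drop a (take b xs)) \<subseteq># mset xs"
  by (metis append_take_drop_id mset_append mset_subset_eq_add_left mset_subset_eq_add_right
      subset_mset.order_trans)

lemma card_integer_box:
  "card (\<Pi>\<^sub>E c\<in>UNIV. {- int (m c) .. int (m c)}) = (\<Prod>c\<in>UNIV. 2 * m c + 1)"
  for m :: "'c::finite \<Rightarrow> nat"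
  by (simp add: card_PiE) (intro prod.cong; auto simp: nat_add_distrib nat_mult_distrib)

lemma of_int_sum_mset: "(\<Sum>x\<in>#X. of_int (g x)) = of_int (\<Sum>x\<in>#X. g x)"
  by (induction X) auto

lemma of_int_sum_list_map: "(\<Sum>x\<leftarrow>xs. of_int (g x)) = of_int (\<Sum>x\<leftarrow>xs. g x)"
  by (induction xs) auto

lemma bounded_vectors_proper_zero_sum_submultiset:
  fixes f :: "'b \<Rightarrow> 'c::finite \<Rightarrow> int" and bd :: "'c \<Rightarrow> nat"
  assumes sum0: "\<forall>c. (\<Sum>x\<in>#X. f x c) = 0" and bnd: "\<forall>x\<in>#X. \<forall>c. \<bar>f x c\<bar> \<le> int (bd c)"
    and big: "(\<Prod>c\<in>UNIV. 2 * (CARD('c) * bd c) + 1) < size X"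
  shows "\<exists>Y. Y \<subset># X \<and> Y \<noteq> {#} \<and> (\<forall>c. (\<Sum>x\<in>#Y. f x c) = 0)"
proof -
  let ?D = "CARD('c)"
  obtain ys where ys: "mset ys = X"
    "\<forall>j c. \<bar>\<Sum>x\<leftarrow>take j ys. real_of_int (f x c)\<bar> \<le> real ?D * real (bd c)"
    using steinitz[where X=X and f="\<lambda>x c. real_of_int (f x c)" and M="\<lambda>c. real (bd c)"] sum0 bnd
    by (simp add: of_int_sum_mset) (metis of_int_abs of_int_le_iff of_int_of_nat_eq)
  define P where "P j c = (\<Sum>x\<leftarrow>take j ys. f x c)" for j c
  have "real_of_int \<bar>P j c\<bar> \<le> real_of_int (int (?D * bd c))" for j c
    using spec[OF spec[OF ys(2), of j], of c] by (simp add: P_def of_int_sum_list_map)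
  then have "\<bar>P j c\<bar> \<le> int (?D * bd c)" for j c
    using of_int_le_iff by blast
  then have "P ` {..<size X} \<subseteq> (\<Pi>\<^sub>E c\<in>UNIV. {- int (?D * bd c) .. int (?D * bd c)})"
    by (auto simp: PiE_UNIV_domain abs_le_iff minus_le_iff)
  moreover have "card (\<Pi>\<^sub>E c\<in>UNIV. {- int (?D * bd c) .. int (?D * bd c)}) < size X"
    using big by (simp only: card_integer_box)
  ultimately obtain a b where ab: "a < b" "b < size X" "P a = P b"
    by (rule pigeonhole_less[rotated]) (auto intro!: finite_PiE)
  define Y where "Y = mset (drop a (take b ys))"
  have "Y \<subseteq># X" using ys(1) mset_drop_take_subset by (auto simp: Y_def)
  moreover have "size Y = b - a" using ab ys(1) by (auto simp: Y_def)
  moreover have "(\<Sum>x\<in>#Y. f x c) = 0" for c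
  proof -
    have "P b c = P a c + (\<Sum>x\<leftarrow>drop a (take b ys). f x c)"
      using sum_list_take_split[of a b "map (\<lambda>x. f x c) ys"] ab(1)
      by (simp add: P_def take_map drop_map)
    then show ?thesis using ab(3) by (simp add: Y_def sum_mset_sum_list flip: mset_map)
  qed
  moreover have "Y \<noteq> X" "Y \<noteq> {#}" using \<open>size Y = b - a\<close> ab by auto
  ultimately show ?thesis by (auto simp: subset_mset.less_le)
qed

section \<open>Zero-sum subsequences and exchanges of atoms\<close>

lemma zero_sum_subsequence_exists:
  fixes S :: "'a::{finite,ab_group_add} multiset"
  assumes "CARD('a) \<le> size S"
  shows "\<exists>T. T \<subseteq># S \<and> T \<noteq> {#} \<and> sum_mset T = 0"
proof -
  obtain xs where xs: "mset xs = S" using ex_mset by blast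
  define P where "P j = sum_list (take j xs)" for j
  obtain a b where ab: "a < b" "b < CARD('a) + 1" "P a = P b"
    using pigeonhole_less[of UNIV P "CARD('a) + 1"] by auto
  define T where "T = mset (drop a (take b xs))"
  have "T \<subseteq># S" using xs mset_drop_take_subset by (auto simp: T_def)
  moreover have "T \<noteq> {#}" using ab assms xs by (auto simp: T_def)
  moreover have "sum_mset T = 0"
    using sum_list_take_split[of a b xs] ab by (simp add: T_def P_def sum_mset_sum_list)
  ultimately show ?thesis by blast
qed

lemma minimal_zero_sum_size_le:
  fixes A :: "'a::{finite,ab_group_add} multiset"
  assumes "minimal_zero_sum A"
  shows "size A \<le> CARD('a)"
proof (rule ccontr)
  assume "\<not> ?thesis"
  then have big: "CARD('a) < size A" by simp
  obtain xs where xs: "mset xs = A" using ex_mset by blast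
  define S where "S = mset (take CARD('a) xs)"
  have S: "S \<subseteq># A" "size S = CARD('a)"
    using xs big mset_drop_take_subset[of 0 _ xs] by (auto simp: S_def)
  then obtain T where T: "T \<subseteq># S" "T \<noteq> {#}" "sum_mset T = 0"
    using zero_sum_subsequence_exists[of S] by auto
  then have "T = A"
    using assms S(1) unfolding minimal_zero_sum_def zero_sum_def by (meson subset_mset.order_trans)
  then show False using size_mset_mono[OF T(1)] S(2) big by simp
qed

lemma is_factorization_exchange:
  assumes "is_factorization x" "is_factorization z" "\<beta> \<subseteq># x" "\<alpha> \<subseteq># z"
  shows "is_factorization (x - \<beta> + \<alpha>)"
  using assms unfolding is_factorization_def by (meson in_diffD mset_subset_eqD union_iff)

lemma sum_mset_exchange:
  fixes x :: "'b::cancel_comm_monoid_add multiset"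
  assumes "\<beta> \<subseteq># x" "sum_mset \<alpha> = sum_mset \<beta>"
  shows "sum_mset (x - \<beta> + \<alpha>) = sum_mset x"
  using assms by (metis subset_mset.diff_add sum_mset.union)

lemma exchange_diff_eq:
  assumes "\<beta> \<subseteq># x - z" "\<alpha> \<subseteq># z - x"
  shows "(x - \<beta> + \<alpha>) - z = (x - z) - \<beta>"
proof (rule multiset_eqI)
  fix a
  have "count \<beta> a \<le> count x a - count z a" "count \<alpha> a \<le> count z a - count x a"
    using assms by (auto dest: mset_subset_eq_count)
  then show "count (x - \<beta> + \<alpha> - z) a = count (x - z - \<beta>) a" by simp
qed

lemma exchange_diff_subset: "(z - \<alpha> + \<beta>) - z \<subseteq># \<beta>"
  by (rule mset_subset_eqI) simp

lemma sum_mset_diff_swap: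
  fixes x :: "'b::cancel_comm_monoid_add multiset"
  assumes "sum_mset x = sum_mset z"
  shows "sum_mset (x - z) = sum_mset (z - x)"
proof -
  have "x = (x - z) + x \<inter># z" "z = (z - x) + x \<inter># z"
    by (metis diff_intersect_left_idem subset_mset.diff_add subset_mset.inf.cobounded1
        subset_mset.inf_commute)+
  then show ?thesis using assms by (metis add_right_cancel sum_mset.union)
qed

lemma sum_mset_eq_imp_eq_of_nonempty:
  fixes X :: "'b multiset multiset"
  assumes "\<alpha> \<subseteq># X" "\<forall>A\<in>#X. A \<noteq> {#}" "sum_mset \<alpha> = sum_mset X"
  shows "\<alpha> = X"
proof -
  have "sum_mset X = sum_mset \<alpha> + sum_mset (X - \<alpha>)"
    using assms(1) by (metis subset_mset.add_diff_inverse sum_mset.union)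
  then have "\<forall>A\<in>#X - \<alpha>. A = {#}" using assms(3) by simp
  then have "X - \<alpha> = {#}" using assms(2) by (meson in_diffD multiset_nonemptyE)
  then show ?thesis using assms(1) by (metis subset_mset.add_diff_inverse add_0_right)
qed

section \<open>Encoding an exchange by integer vectors\<close>

text \<open>\<open>Old A\<close> and \<open>New A\<close> stand for the atoms of \<open>z - \<xi>\<close> and \<open>\<xi> - z\<close>; the pads balance the
  length coordinate \<open>None\<close> of \<open>exchange_vector\<close>, whose coordinate \<open>Some g\<close> counts \<open>g\<close>.\<close>

datatype 'b exchange_item = Old 'b | New 'b | Old_pad | New_pad

fun old_atom :: "'b exchange_item \<Rightarrow> 'b multiset" where
  "old_atom (Old A) = {#A#}"
| "old_atom _ = {#}"

fun new_atom :: "'b exchange_item \<Rightarrow> 'b multiset" where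
  "new_atom (New A) = {#A#}"
| "new_atom _ = {#}"

definition old_part :: "'b exchange_item multiset \<Rightarrow> 'b multiset" where
  "old_part M = (\<Sum>x\<in>#M. old_atom x)"

definition new_part :: "'b exchange_item multiset \<Rightarrow> 'b multiset" where
  "new_part M = (\<Sum>x\<in>#M. new_atom x)"

fun exchange_vector :: "'a multiset exchange_item \<Rightarrow> 'a option \<Rightarrow> int" where
  "exchange_vector (Old A) c = (case c of None \<Rightarrow> 1 | Some g \<Rightarrow> int (count A g))"
| "exchange_vector (New A) c = - (case c of None \<Rightarrow> 1 | Some g \<Rightarrow> int (count A g))"
| "exchange_vector Old_pad c = (case c of None \<Rightarrow> 1 | Some g \<Rightarrow> 0)"
| "exchange_vector New_pad c = (case c of None \<Rightarrow> -1 | Some g \<Rightarrow> 0)"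

lemma old_new_part_simps [simp]:
  "old_part {#} = {#}" "new_part {#} = {#}"
  "old_part (add_mset x M) = old_atom x + old_part M"
  "new_part (add_mset x M) = new_atom x + new_part M"
  "old_part (M + N) = old_part M + old_part N" "new_part (M + N) = new_part M + new_part N"
  by (simp_all add: old_part_def new_part_def)

lemma old_new_part_image [simp]:
  "old_part (image_mset Old X) = X" "new_part (image_mset Old X) = {#}"
  "old_part (image_mset New X) = {#}" "new_part (image_mset New X) = X"
  "old_part (replicate_mset n Old_pad) = {#}" "new_part (replicate_mset n Old_pad) = {#}"
  "old_part (replicate_mset n New_pad) = {#}" "new_part (replicate_mset n New_pad) = {#}"
  by (induction X; simp; fail)+ (induction n; simp)+

lemma old_new_part_mono:
  assumes "M \<subseteq># N"
  shows "old_part M \<subseteq># old_part N" "new_part M \<subseteq># new_part N"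
  using assms by (metis mset_subset_eq_add_left old_new_part_simps(5,6) subset_mset.add_diff_inverse)+

lemma size_by_old_new_part:
  "size M = size (old_part M) + size (new_part M) + count M Old_pad + count M New_pad"
proof (induction M)
  case (add x M)
  then show ?case by (cases x) auto
qed simp

lemma sum_exchange_vector_Some:
  "(\<Sum>x\<in>#M. exchange_vector x (Some g)) =
     int (count (sum_mset (old_part M)) g) - int (count (sum_mset (new_part M)) g)"
proof (induction M)
  case (add x M)
  then show ?case by (cases x) auto
qed simp

lemma sum_exchange_vector_None:
  "(\<Sum>x\<in>#M. exchange_vector x None) =
     int (size (old_part M)) - int (size (new_part M)) + int (count M Old_pad) - int (count M New_pad)"
proof (induction M)
  case (add x M)
  then show ?case by (cases x) auto
qed simp

lemma eq_by_old_new_part: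
  assumes "M \<subseteq># N" "old_part M = old_part N" "new_part M = new_part N"
    "count M Old_pad = count N Old_pad" "count M New_pad = count N New_pad"
  shows "M = N"
  using assms size_by_old_new_part[of M] size_by_old_new_part[of N]
  by (metis mset_subset_size nless_le subset_mset.le_less)

text \<open>The number of integer points in the box of Steinitz partial sums: \<open>2(n + 1) + 1\<close> values in
  the length coordinate and \<open>2(n + 1)n + 1\<close> in each of the \<open>n\<close> group coordinates.\<close>

definition exchange_bound :: "nat \<Rightarrow> nat" where
  "exchange_bound n = (2 * n + 3) * (2 * (n + 1) * n + 1) ^ n"

lemma prod_UNIV_option: "(\<Prod>c\<in>UNIV. h c) = h None * (\<Prod>a\<in>UNIV. h (Some a))"
  for h :: "'a::finite option \<Rightarrow> 'b::comm_monoid_mult"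
  by (simp add: UNIV_option_conv prod.reindex)

lemma proper_balanced_subexchange:
  fixes \<zeta> \<xi> :: "'a::{finite,ab_group_add} multiset multiset"
  assumes atoms: "\<forall>A\<in>#\<zeta> + \<xi>. minimal_zero_sum A"
    and sums: "sum_mset \<zeta> = sum_mset \<xi>" and lens: "size \<zeta> + p = size \<xi> + q"
    and big: "exchange_bound CARD('a) < size \<zeta> + size \<xi> + p + q"
  obtains \<alpha> \<beta> e f where "\<alpha> \<subseteq># \<zeta>" "\<beta> \<subseteq># \<xi>" "e \<le> p" "f \<le> q"
    "sum_mset \<alpha> = sum_mset \<beta>" "size \<alpha> + e = size \<beta> + f"
    "(\<alpha>, \<beta>, e, f) \<noteq> ({#}, {#}, 0, 0)" "(\<alpha>, \<beta>, e, f) \<noteq> (\<zeta>, \<xi>, p, q)"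
proof -
  let ?n = "CARD('a)"
  define X where "X = image_mset Old \<zeta> + image_mset New \<xi> + replicate_mset p Old_pad
    + replicate_mset q New_pad"
  have X: "old_part X = \<zeta>" "new_part X = \<xi>" "count X Old_pad = p" "count X New_pad = q"
    by (auto simp: X_def count_eq_zero_iff)
  define bd :: "'a option \<Rightarrow> nat" where "bd c = (case c of None \<Rightarrow> 1 | Some _ \<Rightarrow> ?n)" for c
  have "(\<Sum>x\<in>#X. exchange_vector x c) = 0" for c
  proof (cases c)
    case None
    then show ?thesis using lens X sum_exchange_vector_None[of X] by simp
  next
    case (Some g)
    then show ?thesis using sums X sum_exchange_vector_Some[where M=X and g=g] by simp
  qed
  moreover have "\<bar>exchange_vector x c\<bar> \<le> int (bd c)" if "x \<in># X" for x c
  proof (cases x)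
    case (Old A)
    then have "size A \<le> ?n" using atoms that minimal_zero_sum_size_le by (auto simp: X_def split: if_splits)
    then show ?thesis using Old count_le_size[of A] by (cases c) (auto simp: bd_def intro: le_trans)
  next
    case (New A)
    then have "size A \<le> ?n" using atoms that minimal_zero_sum_size_le by (auto simp: X_def split: if_splits)
    then show ?thesis using New count_le_size[of A] by (cases c) (auto simp: bd_def intro: le_trans)
  qed (cases c; simp add: bd_def)+
  moreover have "(\<Prod>c\<in>UNIV. 2 * (CARD('a option) * bd c) + 1) = exchange_bound ?n"
    by (simp add: prod_UNIV_option bd_def exchange_bound_def algebra_simps)
  moreover have "size X = size \<zeta> + size \<xi> + p + q" by (simp add: X_def)
  ultimately obtain Y where Y: "Y \<subset># X" "Y \<noteq> {#}" "\<forall>c. (\<Sum>x\<in>#Y. exchange_vector x c) = 0"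
    using bounded_vectors_proper_zero_sum_submultiset[where X=X and f=exchange_vector and bd=bd] big by auto
  show ?thesis
  proof (rule that)
    show "old_part Y \<subseteq># \<zeta>" "new_part Y \<subseteq># \<xi>"
      using old_new_part_mono[of Y X] Y(1) X by auto
    show "count Y Old_pad \<le> p" "count Y New_pad \<le> q"
      using Y(1) X by (metis mset_subset_eq_count subset_mset.less_imp_le)+
    show "sum_mset (old_part Y) = sum_mset (new_part Y)"
      using Y(3) sum_exchange_vector_Some[where M=Y] by (auto simp: multiset_eq_iff)
    show "size (old_part Y) + count Y Old_pad = size (new_part Y) + count Y New_pad"
      using spec[OF Y(3), of None] sum_exchange_vector_None[of Y] by simp
    show "(old_part Y, new_part Y, count Y Old_pad, count Y New_pad) \<noteq> ({#}, {#}, 0, 0)"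
      using Y(2) size_by_old_new_part[of Y] by (metis Pair_inject add_is_0 size_eq_0_iff_empty size_empty)
    show "(old_part Y, new_part Y, count Y Old_pad, count Y New_pad) \<noteq> (\<zeta>, \<xi>, p, q)"
      using Y(1) eq_by_old_new_part[of Y X] X by (auto simp: subset_mset.less_le)
  qed
qed

section \<open>Adjacent lengths are realised by close factorizations\<close>

definition nearest_factorization :: "'a::ab_group_add multiset multiset \<Rightarrow> 'a multiset multiset \<Rightarrow> bool" where
  "nearest_factorization z \<xi> \<longleftrightarrow> is_factorization \<xi> \<and> sum_mset \<xi> = sum_mset z \<and>
     (\<forall>y. is_factorization y \<and> sum_mset y = sum_mset z \<and> size y = size \<xi> \<longrightarrow>
        size (\<xi> - z) \<le> size (y - z))"

lemma nearest_factorization_exists: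
  assumes "k \<in> lengths (sum_mset z)"
  shows "\<exists>\<xi>. nearest_factorization z \<xi> \<and> size \<xi> = k"
proof -
  let ?P = "\<lambda>y. is_factorization y \<and> sum_mset y = sum_mset z \<and> size y = k"
  obtain y where "?P y" using assms by (auto simp: lengths_def fact_pi_def)
  then obtain \<xi> where "?P \<xi>" "\<forall>y. ?P y \<longrightarrow> size (\<xi> - z) \<le> size (y - z)"
    using ex_has_least_nat[of ?P y "\<lambda>y. size (y - z)"] by blast
  then show ?thesis by (auto simp: nearest_factorization_def)
qed

lemma nearest_factorization_exchange_same_length:
  assumes \<xi>: "nearest_factorization z \<xi>" and z: "is_factorization z"
    and \<beta>: "\<beta> \<subseteq># \<xi> - z" and \<alpha>: "\<alpha> \<subseteq># z - \<xi>"
    and "sum_mset \<alpha> = sum_mset \<beta>" "size \<alpha> = size \<beta>"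
  shows "\<beta> = {#}"
proof (rule ccontr)
  assume "\<beta> \<noteq> {#}"
  have \<beta>_sub: "\<beta> \<subseteq># \<xi>" "\<alpha> \<subseteq># z" using \<alpha> \<beta> subset_mset.order_trans by fastforce+
  define x where "x = \<xi> - \<beta> + \<alpha>"
  have "is_factorization x"
    unfolding x_def using \<xi> z \<beta>_sub
    by (intro is_factorization_exchange) (auto simp: nearest_factorization_def)
  moreover have "sum_mset x = sum_mset z"
    using sum_mset_exchange[OF \<beta>_sub(1) assms(5)] \<xi> by (simp add: x_def nearest_factorization_def)
  moreover have "size x = size \<xi>"
    using size_Diff_submset[OF \<beta>_sub(1)] size_mset_mono[OF \<beta>_sub(1)] assms(6)
    by (simp add: x_def)
  ultimately have "size (\<xi> - z) \<le> size (x - z)" using \<xi> by (auto simp: nearest_factorization_def)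
  also have "size (x - z) = size (\<xi> - z) - size \<beta>"
    unfolding x_def exchange_diff_eq[OF \<beta> \<alpha>] by (rule size_Diff_submset[OF \<beta>])
  finally show False
    using \<open>\<beta> \<noteq> {#}\<close> size_mset_mono[OF \<beta>] by (simp add: nonempty_has_size)
qed

lemma nearest_factorization_exchange_to_length:
  assumes \<xi>: "nearest_factorization z \<xi>" and z: "is_factorization z"
    and \<beta>: "\<beta> \<subseteq># \<xi> - z" and \<alpha>: "\<alpha> \<subseteq># z - \<xi>"
    and "sum_mset \<alpha> = sum_mset \<beta>" "size z + size \<beta> = size \<xi> + size \<alpha>"
  shows "\<beta> = \<xi> - z"
proof -
  have \<beta>_sub: "\<beta> \<subseteq># \<xi>" "\<alpha> \<subseteq># z" using \<alpha> \<beta> subset_mset.order_trans by fastforce+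
  define y where "y = z - \<alpha> + \<beta>"
  have "is_factorization y"
    unfolding y_def using \<xi> z \<beta>_sub
    by (intro is_factorization_exchange) (auto simp: nearest_factorization_def)
  moreover have "sum_mset y = sum_mset z"
    using sum_mset_exchange[OF \<beta>_sub(2) assms(5)[symmetric]] by (simp add: y_def)
  moreover have "size y = size \<xi>"
    using size_Diff_submset[OF \<beta>_sub(2)] size_mset_mono[OF \<beta>_sub(2)] assms(6)
    by (simp add: y_def)
  ultimately have "size (\<xi> - z) \<le> size (y - z)" using \<xi> by (auto simp: nearest_factorization_def)
  also have "\<dots> \<le> size \<beta>" unfolding y_def by (rule size_mset_mono[OF exchange_diff_subset])
  finally show ?thesis
    using \<beta> by (metis mset_subset_size not_less subset_mset.le_less)
qed

lemma nearest_factorization_close: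
  fixes z \<xi> :: "'a::{finite,ab_group_add} multiset multiset"
  assumes \<xi>: "nearest_factorization z \<xi>" and z: "is_factorization z"
    and adj: "adjacent_lengths (sum_mset z) (size \<xi>) (size z)"
  shows "size (z - \<xi>) + size (\<xi> - z) \<le> exchange_bound CARD('a)"
proof (rule ccontr)
  assume big: "\<not> ?thesis"
  define k l where "k = size \<xi>" and "l = size z"
  have kl: "k \<noteq> l" and between: "\<And>m. m \<in> lengths (sum_mset z) \<Longrightarrow> \<not> (min k l < m \<and> m < max k l)"
    using adj by (auto simp: adjacent_lengths_def k_def l_def)
  have \<xi>_fact: "is_factorization \<xi>" "sum_mset \<xi> = sum_mset z"
    using \<xi> by (simp_all add: nearest_factorization_def)
  have "size (z - \<xi>) + size (\<xi> \<inter># z) = l" "size (\<xi> - z) + size (\<xi> \<inter># z) = k"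
    using size_Diff_submset[of "\<xi> \<inter># z" z] size_Diff_submset[of "\<xi> \<inter># z" \<xi>]
      size_mset_mono[of "\<xi> \<inter># z" z] size_mset_mono[of "\<xi> \<inter># z" \<xi>]
    by (simp_all add: k_def l_def)
  then have lens: "size (z - \<xi>) + (k - l) = size (\<xi> - z) + (l - k)" by linarith
  have atoms: "\<forall>A\<in>#(z - \<xi>) + (\<xi> - z). minimal_zero_sum A"
    using z \<xi>_fact(1) by (auto simp: is_factorization_def dest: in_diffD)
  have big': "exchange_bound CARD('a) < size (z - \<xi>) + size (\<xi> - z) + (k - l) + (l - k)"
    using big by linarith
  obtain \<alpha> \<beta> e f where ex: "\<alpha> \<subseteq># z - \<xi>" "\<beta> \<subseteq># \<xi> - z" "e \<le> k - l" "f \<le> l - k"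
      "sum_mset \<alpha> = sum_mset \<beta>" "size \<alpha> + e = size \<beta> + f"
      "(\<alpha>, \<beta>, e, f) \<noteq> ({#}, {#}, 0, 0)" "(\<alpha>, \<beta>, e, f) \<noteq> (z - \<xi>, \<xi> - z, k - l, l - k)"
    by (rule proper_balanced_subexchange[OF atoms sum_mset_diff_swap[OF \<xi>_fact(2)[symmetric]] lens big'])
  \<comment> \<open>exchanging \<open>\<beta>\<close> for \<open>\<alpha>\<close> in \<open>\<xi>\<close> gives a length between \<open>k\<close> and \<open>l\<close>,
      so it is one of them\<close>
  have \<beta>_sub: "\<beta> \<subseteq># \<xi>" "\<alpha> \<subseteq># z" using ex(1,2) subset_mset.order_trans by fastforce+
  define x where "x = \<xi> - \<beta> + \<alpha>"
  have "size x = size (\<xi> - \<beta>) + size \<alpha>" unfolding x_def by (rule size_union)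
  then have "size x + e = k + f"
    using ex(6) size_Diff_submset[OF \<beta>_sub(1)] size_mset_mono[OF \<beta>_sub(1)] by (simp add: k_def)
  moreover have "size x \<in> lengths (sum_mset z)"
  proof -
    have "is_factorization x"
      unfolding x_def using \<xi>_fact(1) z \<beta>_sub by (rule is_factorization_exchange)
    moreover have "sum_mset x = sum_mset z"
      using sum_mset_exchange[OF \<beta>_sub(1) ex(5)] \<xi>_fact(2) by (simp add: x_def)
    ultimately show ?thesis by (auto simp: lengths_def fact_pi_def)
  qed
  ultimately have "e = f \<or> (e = k - l \<and> f = l - k)"
    using between[of "size x"] ex(3,4) kl unfolding min_def max_def by (cases "k \<le> l") auto
  then show False
  proof
    assume "e = f"
    then have "\<beta> = {#}"
      using nearest_factorization_exchange_same_length[OF \<xi> z ex(2,1,5)] ex(6) by simp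
    moreover have "\<alpha> = {#}" using ex(6) \<open>e = f\<close> \<open>\<beta> = {#}\<close> by simp
    ultimately show False using ex(3,4,7) \<open>e = f\<close> by auto
  next
    assume ef: "e = k - l \<and> f = l - k"
    then have "\<beta> = \<xi> - z"
      using nearest_factorization_exchange_to_length[OF \<xi> z ex(2,1,5)] ex(6) k_def l_def by linarith
    moreover have "\<alpha> = z - \<xi>"
      using sum_mset_eq_imp_eq_of_nonempty[OF ex(1)] ex(5) \<open>\<beta> = \<xi> - z\<close> z
        sum_mset_diff_swap[OF \<xi>_fact(2)]
      by (auto simp: is_factorization_def minimal_zero_sum_def dest: in_diffD)
    ultimately show False using ex(8) ef by simp
  qed
qed

lemma adjacent_length_close_factorization:
  fixes z :: "'a::{finite,ab_group_add} multiset multiset"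
  assumes z: "is_factorization z" and adj: "adjacent_lengths (fact_pi z) k (size z)"
  shows "\<exists>x. is_factorization x \<and> fact_pi x = fact_pi z \<and> size x = k \<and>
           fact_dist x z \<le> exchange_bound CARD('a)"
proof -
  obtain \<xi> where \<xi>: "nearest_factorization z \<xi>" "size \<xi> = k"
    using adj nearest_factorization_exists[where z=z and k=k]
    by (auto simp: adjacent_lengths_def fact_pi_def)
  have "fact_dist \<xi> z \<le> size (z - \<xi>) + size (\<xi> - z)"
    by (simp add: fact_dist_def inf_commute)
  also have "\<dots> \<le> exchange_bound CARD('a)"
    using nearest_factorization_close[OF \<xi>(1) z] adj \<xi>(2) by (simp add: fact_pi_def)
  finally show ?thesis using \<xi> by (auto simp: nearest_factorization_def fact_pi_def)
qed

lemma exchange_bound_le: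
  assumes "2 \<le> n"
  shows "exchange_bound n \<le> (2 * n) ^ (3 * n + 1)"
proof -
  have "2 * n \<le> n * n" using mult_le_mono1[OF assms] .
  moreover have "(2 * n) ^ 2 = 4 * (n * n)" "2 * (n + 1) * n + 1 = 2 * (n * n) + 2 * n + 1"
    by (simp_all add: power2_eq_square algebra_simps)
  ultimately have base: "2 * (n + 1) * n + 1 \<le> (2 * n) ^ 2" and lin: "2 * n + 3 \<le> (2 * n) ^ 2"
    using assms by linarith+
  have "(2 * n) ^ 2 \<le> (2 * n) ^ (n + 1)"
    using assms by (intro power_increasing) auto
  with lin have "2 * n + 3 \<le> (2 * n) ^ (n + 1)" by (rule order.trans)
  moreover have "(2 * (n + 1) * n + 1) ^ n \<le> ((2 * n) ^ 2) ^ n"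
    using base by (rule power_mono) simp
  then have "(2 * (n + 1) * n + 1) ^ n \<le> (2 * n) ^ (2 * n)"
    by (simp only: power_mult)
  ultimately have "exchange_bound n \<le> (2 * n) ^ (n + 1) * (2 * n) ^ (2 * n)"
    unfolding exchange_bound_def by (rule mult_le_mono)
  also have "\<dots> = (2 * n) ^ ((n + 1) + 2 * n)" by (rule power_add[symmetric])
  also have "\<dots> = (2 * n) ^ (3 * n + 1)" by (rule arg_cong[where f="\<lambda>e. (2 * n) ^ e"]) simp
  finally show ?thesis .
qed

lemma lengths_trivial_group:
  fixes B :: "'a::{finite,ab_group_add} multiset"
  assumes "CARD('a) = 1" "m \<in> lengths B"
  shows "m = size B"
proof -
  obtain y where y: "m = size y" "is_factorization y" "sum_mset y = B"
    using assms(2) by (auto simp: lengths_def fact_pi_def)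
  have "\<forall>A\<in>#y. size A = 1"
  proof
    fix A assume "A \<in># y"
    then have "minimal_zero_sum A" using y(2) by (simp add: is_factorization_def)
    then have "A \<noteq> {#}" "size A \<le> 1"
      using minimal_zero_sum_size_le[of A] assms(1) by (auto simp: minimal_zero_sum_def)
    then show "size A = 1" by (simp add: le_Suc_eq)
  qed
  then have "size (sum_mset y) = size y" by (induction y) auto
  then show ?thesis using y by simp
qed

lemma delta_fact_le:
  fixes z :: "'a::{finite,ab_group_add} multiset multiset"
  assumes z: "is_factorization z"
  shows "delta_fact z \<le> (2 * CARD('a)) ^ (3 * CARD('a) + 1)"
  unfolding delta_fact_def
proof (rule Least_le, intro allI impI)
  fix k assume k: "1 \<le> k \<and> adjacent_lengths (fact_pi z) k (size z)"
  have "CARD('a) \<noteq> 1"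
    using k lengths_trivial_group[where B="fact_pi z" and m=k]
      lengths_trivial_group[where B="fact_pi z" and m="size z"]
    by (auto simp: adjacent_lengths_def)
  moreover have "0 < CARD('a)" by (rule finite_UNIV_card_ge_0) (rule finite_class.finite_UNIV)
  ultimately have "2 \<le> CARD('a)" by linarith
  then show "\<exists>x. is_factorization x \<and> fact_pi x = fact_pi z \<and> size x = k \<and>
      fact_dist x z \<le> (2 * CARD('a)) ^ (3 * CARD('a) + 1)"
    using adjacent_length_close_factorization[OF z, where k=k] k exchange_bound_le[of "CARD('a)"]
    by (meson order.trans)
qed

theorem theorem6p5:
  shows "successive_distance TYPE('a::{finite,ab_group_add})
           \<le> enat ((2 * card (UNIV :: 'a set)) ^ (3 * card (UNIV :: 'a set) + 1))"
  unfolding successive_distance_def using delta_fact_le by (auto intro!: Sup_least)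

end
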